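(* Let $n\ge 2$. Each inverse subsemigroup of $(S_n,\cdot,{}^{-1})$ generated by fewer than $n$ elements lies in the variety of inverse semigroups (algebras of type $(2,1)$) generated by the $6$-element Brandt monoid $(B_2^1,\cdot,{}^{-1})$.
   Context: For $n\ge2$, $(S_n,\cdot,{}^{-1})$ is the inverse semigroup of partial one-to-one transformations of $\{0,1,\dots,3n+2\}$ (acting on the right, composition $x(\alpha\beta)=(x\alpha)\beta$, ${}^{-1}$ the inverse partial map) generated by the $n+1$ partial maps $\chi:\ n\mapsto 2n+1,\ n+1\mapsto 2n+2$ (undefined elsewhere) and, for $i=1,\dots,n$, $\chi_i:\ i-1\mapsto i,\ n+1+i\mapsto n+i,\ 2n+1+i\mapsto 2n+2+i$ (undefined elsewhere). The $6$-element Brandt monoid is $B_2^1$, where $B_2=\langle c,d\mid cdc=c,\ dcd=d,\ c^2=d^2=0\rangle=\{c,d,cd,dc,0\}$ and $1$ is an adjoined identity; it is an inverse semigroup, $s^{-1}$ denoting the unique inverse of $s$ (so $c^{-1}=d$, $d^{-1}=c$, and $1,cd,dc,0$ are self-inverse). *)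

theory Defs
  imports Main
begin

type_synonym pmap = "nat \<rightharpoonup> nat"

text \<open>Product acting on the right: x(a b) = (x a) b.\<close>
definition pmul :: "pmap \<Rightarrow> pmap \<Rightarrow> pmap" where
  "pmul a b = b \<circ>\<^sub>m a"

definition pinv :: "pmap \<Rightarrow> pmap" where
  "pinv a = (\<lambda>y. if \<exists>x. a x = Some y then Some (THE x. a x = Some y) else None)"

definition chi :: "nat \<Rightarrow> pmap" where
  "chi n = [n \<mapsto> 2*n+1, n+1 \<mapsto> 2*n+2]"

definition chi_i :: "nat \<Rightarrow> nat \<Rightarrow> pmap" where
  "chi_i n i = [i-1 \<mapsto> i, n+1+i \<mapsto> n+i, 2*n+1+i \<mapsto> 2*n+2+i]"

inductive_set inv_closure :: "pmap set \<Rightarrow> pmap set" for X where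
  gen: "a \<in> X \<Longrightarrow> a \<in> inv_closure X"
| mul: "a \<in> inv_closure X \<Longrightarrow> b \<in> inv_closure X \<Longrightarrow> pmul a b \<in> inv_closure X"
| inv: "a \<in> inv_closure X \<Longrightarrow> pinv a \<in> inv_closure X"

definition S :: "nat \<Rightarrow> pmap set" where
  "S n = inv_closure ({chi n} \<union> {chi_i n i | i. 1 \<le> i \<and> i \<le> n})"

datatype B21 = One | C | D | CD | DC | Zero

fun bmul :: "B21 \<Rightarrow> B21 \<Rightarrow> B21" where
  "bmul One y = y"
| "bmul x One = x"
| "bmul Zero _ = Zero"
| "bmul _ Zero = Zero"
| "bmul C C = Zero" | "bmul C D = CD" | "bmul C CD = Zero" | "bmul C DC = C"
| "bmul D C = DC" | "bmul D D = Zero" | "bmul D CD = D" | "bmul D DC = Zero"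
| "bmul CD C = C" | "bmul CD D = Zero" | "bmul CD CD = CD" | "bmul CD DC = Zero"
| "bmul DC C = Zero" | "bmul DC D = D" | "bmul DC CD = Zero" | "bmul DC DC = DC"

fun binv :: "B21 \<Rightarrow> B21" where
  "binv C = D" | "binv D = C" | "binv x = x"

datatype trm = Var nat | Mul trm trm | Inv trm

fun eval :: "('a \<Rightarrow> 'a \<Rightarrow> 'a) \<Rightarrow> ('a \<Rightarrow> 'a) \<Rightarrow> (nat \<Rightarrow> 'a) \<Rightarrow> trm \<Rightarrow> 'a" where
  "eval m i \<sigma> (Var k) = \<sigma> k"
| "eval m i \<sigma> (Mul s t) = m (eval m i \<sigma> s) (eval m i \<sigma> t)"
| "eval m i \<sigma> (Inv s) = i (eval m i \<sigma> s)"

definition satisfies :: "'a set \<Rightarrow> ('a \<Rightarrow> 'a \<Rightarrow> 'a) \<Rightarrow> ('a \<Rightarrow> 'a) \<Rightarrow> trm \<Rightarrow> trm \<Rightarrow> bool" where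
  "satisfies A m i s t \<longleftrightarrow> (\<forall>\<sigma>. (\<forall>k. \<sigma> k \<in> A) \<longrightarrow> eval m i \<sigma> s = eval m i \<sigma> t)"

text \<open>Membership in the variety generated by (B_2^1, bmul, binv) (Birkhoff: all identities of B_2^1 hold).\<close>
definition in_var_B21 :: "'a set \<Rightarrow> ('a \<Rightarrow> 'a \<Rightarrow> 'a) \<Rightarrow> ('a \<Rightarrow> 'a) \<Rightarrow> bool" where
  "in_var_B21 A m i \<longleftrightarrow>
     (\<forall>s t. satisfies (UNIV :: B21 set) bmul binv s t \<longrightarrow> satisfies A m i s t)"

end

(*
  Every element of S_n either has rank at most one or is one of finitely many special maps: the
  letters chi_i, chi and their inverses, the identities on their domains and ranges, and the maps
  [a -> b, 2n+2+a -> 2n+2+b]. Indeed this set is closed under inversion and under multiplication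
  by letters, and the products of a special map with a letter are computed explicitly.

  B_2^1 is the monoid of partial injections of a two-element set other than the transposition.
  So if a 2-colouring of the points makes a partial injection x either preserve colours or send
  every point from one fixed colour to the other, it labels x by an element of B_2^1. Suppose a
  family K of colourings separates points, labels every generator in this way, and separates
  every point outside the domain (range) of a generator from that whole domain (range). Then the
  labels extend to an injective homomorphism from the generated inverse semigroup into the direct
  power of B_2^1 over K, so all identities of B_2^1 hold there.

  Such a family exists for fewer than n generators, because then some index k has neither chi_k
  nor its inverse among the generators; the two colourings attached to k are compatible with all
  generators although not with chi_k.
*)

theory Submission
  imports Defs
begin

lemma inj_on_dom_iff:
  "inj_on a (dom a) \<longleftrightarrow> (\<forall>x y v. a x = Some v \<longrightarrow> a y = Some v \<longrightarrow> x = y)"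
  unfolding inj_on_def dom_def by force

lemma pinv_eq_Some_iff:
  assumes "inj_on a (dom a)"
  shows "pinv a y = Some x \<longleftrightarrow> a x = Some y"
proof -
  have "(THE x. a x = Some y) = x'" if "a x' = Some y" for x'
    using that assms by (auto simp: inj_on_dom_iff)
  then show ?thesis by (auto simp: pinv_def)
qed

lemma pinv_eq_None_iff: "pinv a y = None \<longleftrightarrow> y \<notin> ran a"
  by (auto simp: pinv_def ran_def)

lemma inj_on_dom_pinv: "inj_on a (dom a) \<Longrightarrow> inj_on (pinv a) (dom (pinv a))"
  by (auto simp: inj_on_dom_iff pinv_eq_Some_iff)

lemma inj_on_dom_pmul:
  "inj_on a (dom a) \<Longrightarrow> inj_on b (dom b) \<Longrightarrow> inj_on (pmul a b) (dom (pmul a b))"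
  unfolding inj_on_dom_iff pmul_def by (auto simp: map_comp_Some_iff)

lemma pinv_pinv: "inj_on a (dom a) \<Longrightarrow> pinv (pinv a) = a"
  by (rule ext) (metis inj_on_dom_pinv not_Some_eq pinv_eq_Some_iff)

lemma pinv_pmul:
  assumes "inj_on a (dom a)" "inj_on b (dom b)"
  shows "pinv (pmul a b) = pmul (pinv b) (pinv a)"
proof (rule ext)
  fix y
  have "pinv (pmul a b) y = Some x \<longleftrightarrow> pmul (pinv b) (pinv a) y = Some x" for x
    using assms inj_on_dom_pmul[OF assms]
    by (auto simp: pinv_eq_Some_iff pmul_def map_comp_Some_iff)
  then show "pinv (pmul a b) y = pmul (pinv b) (pinv a) y"
    by (metis not_Some_eq)
qed

lemma pinv_eqI: "(\<And>x y. a x = Some y \<longleftrightarrow> b y = Some x) \<Longrightarrow> pinv a = b"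
proof (rule ext)
  fix y assume ab: "\<And>x y. a x = Some y \<longleftrightarrow> b y = Some x"
  then have "inj_on a (dom a)" by (auto simp: inj_on_dom_iff)
  then have "pinv a y = Some x \<longleftrightarrow> b y = Some x" for x by (simp add: pinv_eq_Some_iff ab)
  then show "pinv a y = b y" by (metis not_Some_eq)
qed

lemma pmul_assoc: "pmul (pmul a b) c = pmul a (pmul b c)"
  by (auto simp: pmul_def map_comp_def fun_eq_iff split: option.splits)

section \<open>The elements of S_n\<close>

definition rank_le_one :: "pmap \<Rightarrow> bool" where
  "rank_le_one z \<longleftrightarrow> (\<forall>x y. z x \<noteq> None \<longrightarrow> z y \<noteq> None \<longrightarrow> x = y)"

definition ac_shift :: "nat \<Rightarrow> nat \<Rightarrow> nat \<Rightarrow> pmap" where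
  "ac_shift n a b = [a \<mapsto> b, 2*n+2+a \<mapsto> 2*n+2+b]"

definition chi_i_inv :: "nat \<Rightarrow> nat \<Rightarrow> pmap" where
  "chi_i_inv n i = [i \<mapsto> i-1, n+i \<mapsto> n+1+i, 2*n+2+i \<mapsto> 2*n+1+i]"

definition chi_i_dom_id :: "nat \<Rightarrow> nat \<Rightarrow> pmap" where
  "chi_i_dom_id n i = [i-1 \<mapsto> i-1, n+1+i \<mapsto> n+1+i, 2*n+1+i \<mapsto> 2*n+1+i]"

definition chi_i_ran_id :: "nat \<Rightarrow> nat \<Rightarrow> pmap" where
  "chi_i_ran_id n i = [i \<mapsto> i, n+i \<mapsto> n+i, 2*n+2+i \<mapsto> 2*n+2+i]"

definition chi_inv :: "nat \<Rightarrow> pmap" where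
  "chi_inv n = [2*n+1 \<mapsto> n, 2*n+2 \<mapsto> n+1]"

definition chi_dom_id :: "nat \<Rightarrow> pmap" where
  "chi_dom_id n = [n \<mapsto> n, n+1 \<mapsto> n+1]"

definition chi_ran_id :: "nat \<Rightarrow> pmap" where
  "chi_ran_id n = [2*n+1 \<mapsto> 2*n+1, 2*n+2 \<mapsto> 2*n+2]"

lemmas shape_defs = ac_shift_def chi_i_def chi_i_inv_def chi_i_dom_id_def chi_i_ran_id_def
  chi_def chi_inv_def chi_dom_id_def chi_ran_id_def

definition letter :: "nat \<Rightarrow> pmap \<Rightarrow> bool" where
  "letter n g \<longleftrightarrow> (\<exists>j. 1 \<le> j \<and> j \<le> n \<and> (g = chi_i n j \<or> g = chi_i_inv n j))
     \<or> g = chi n \<or> g = chi_inv n"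

definition special :: "nat \<Rightarrow> pmap \<Rightarrow> bool" where
  "special n z \<longleftrightarrow> (\<exists>a b. a \<le> n \<and> b \<le> n \<and> z = ac_shift n a b)
     \<or> (\<exists>i. 1 \<le> i \<and> i \<le> n \<and>
          (z = chi_i n i \<or> z = chi_i_inv n i \<or> z = chi_i_dom_id n i \<or> z = chi_i_ran_id n i))
     \<or> z = chi n \<or> z = chi_inv n \<or> z = chi_dom_id n \<or> z = chi_ran_id n"

definition S_shape :: "nat \<Rightarrow> pmap \<Rightarrow> bool" where
  "S_shape n z \<longleftrightarrow> rank_le_one z \<or> special n z"

lemma special_letter: "letter n g \<Longrightarrow> special n g"
  unfolding letter_def special_def by blast

lemma inj_on_dom_special: "special n z \<Longrightarrow> inj_on z (dom z)"
  by (auto simp: special_def inj_on_dom_iff shape_defs split: if_splits)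

lemma inj_on_dom_S_shape: "S_shape n z \<Longrightarrow> inj_on z (dom z)"
  unfolding S_shape_def rank_le_one_def inj_on_dom_iff
  using inj_on_dom_special[unfolded inj_on_dom_iff] by fastforce

lemma rank_le_one_dom_ran:
  assumes "rank_le_one x"
  shows "\<forall>p\<in>dom x. \<forall>p'\<in>dom x. p = p'" "\<forall>p\<in>ran x. \<forall>p'\<in>ran x. p = p'"
  using assms unfolding rank_le_one_def ran_def by (auto, metis option.inject option.simps(3))

lemma rank_le_one_pmul: "rank_le_one w \<Longrightarrow> rank_le_one (pmul w g)"
  by (auto simp: rank_le_one_def pmul_def map_comp_def split: option.splits)

lemma
  assumes "1 \<le> n"
  shows pmul_ac_shift_chi_i: "Suc b = j \<Longrightarrow> pmul (ac_shift n a b) (chi_i n j) = ac_shift n a j"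
    and pmul_ac_shift_chi_i_inv:
      "b = j \<Longrightarrow> 1 \<le> j \<Longrightarrow> pmul (ac_shift n a b) (chi_i_inv n j) = ac_shift n a (j - 1)"
    and pmul_chi_i_chi_i: "j = Suc i \<Longrightarrow> 1 \<le> i \<Longrightarrow> pmul (chi_i n i) (chi_i n j) = ac_shift n (i - 1) j"
    and pmul_chi_i_chi_i_inv: "1 \<le> i \<Longrightarrow> pmul (chi_i n i) (chi_i_inv n i) = chi_i_dom_id n i"
    and pmul_chi_i_inv_chi_i: "1 \<le> i \<Longrightarrow> pmul (chi_i_inv n i) (chi_i n i) = chi_i_ran_id n i"
    and pmul_chi_i_inv_chi_i_inv:
      "i = Suc j \<Longrightarrow> 1 \<le> j \<Longrightarrow> pmul (chi_i_inv n i) (chi_i_inv n j) = ac_shift n i (j - 1)"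
    and pmul_chi_i_dom_id_chi_i: "1 \<le> i \<Longrightarrow> pmul (chi_i_dom_id n i) (chi_i n i) = chi_i n i"
    and pmul_chi_i_dom_id_chi_i_inv:
      "i = Suc j \<Longrightarrow> 1 \<le> j \<Longrightarrow> pmul (chi_i_dom_id n i) (chi_i_inv n j) = ac_shift n j (j - 1)"
    and pmul_chi_i_ran_id_chi_i: "j = Suc i \<Longrightarrow> pmul (chi_i_ran_id n i) (chi_i n j) = ac_shift n i j"
    and pmul_chi_i_ran_id_chi_i_inv: "1 \<le> i \<Longrightarrow> pmul (chi_i_ran_id n i) (chi_i_inv n i) = chi_i_inv n i"
  using assms by (auto simp: fun_eq_iff pmul_def map_comp_def shape_defs)

lemma
  assumes "1 \<le> n"
  shows pmul_chi_chi_inv: "pmul (chi n) (chi_inv n) = chi_dom_id n"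
    and pmul_chi_inv_chi: "pmul (chi_inv n) (chi n) = chi_ran_id n"
    and pmul_chi_dom_id_chi: "pmul (chi_dom_id n) (chi n) = chi n"
    and pmul_chi_ran_id_chi_inv: "pmul (chi_ran_id n) (chi_inv n) = chi_inv n"
  using assms by (auto simp: fun_eq_iff pmul_def map_comp_def shape_defs)

lemma special_intros:
  "a \<le> n \<Longrightarrow> b \<le> n \<Longrightarrow> special n (ac_shift n a b)"
  "1 \<le> i \<Longrightarrow> i \<le> n \<Longrightarrow> special n (chi_i n i)"
  "1 \<le> i \<Longrightarrow> i \<le> n \<Longrightarrow> special n (chi_i_inv n i)"
  "1 \<le> i \<Longrightarrow> i \<le> n \<Longrightarrow> special n (chi_i_dom_id n i)"
  "1 \<le> i \<Longrightarrow> i \<le> n \<Longrightarrow> special n (chi_i_ran_id n i)"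
  "special n (chi n)" "special n (chi_inv n)" "special n (chi_dom_id n)" "special n (chi_ran_id n)"
  unfolding special_def by blast+

lemmas pmul_table = pmul_ac_shift_chi_i pmul_ac_shift_chi_i_inv pmul_chi_i_chi_i
  pmul_chi_i_chi_i_inv pmul_chi_i_inv_chi_i pmul_chi_i_inv_chi_i_inv pmul_chi_i_dom_id_chi_i
  pmul_chi_i_dom_id_chi_i_inv pmul_chi_i_ran_id_chi_i pmul_chi_i_ran_id_chi_i_inv
  pmul_chi_chi_inv pmul_chi_inv_chi pmul_chi_dom_id_chi pmul_chi_ran_id_chi_inv

lemmas rank_simps = rank_le_one_def pmul_def map_comp_def shape_defs

(* The case distinctions are the index coincidences of pmul_table; in all remaining cases the
   product has rank at most one. *)
lemma special_pmul_letter: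
  assumes n: "2 \<le> n" and w: "special n w" and g: "letter n g"
  shows "special n (pmul w g) \<or> rank_le_one (pmul w g)"
  using g[unfolded letter_def]
proof (elim disjE exE conjE)
  fix j assume j: "1 \<le> j" "j \<le> n" and g: "g = chi_i n j"
  from w[unfolded special_def] n j show ?thesis unfolding g
    apply (elim disjE exE conjE)
    subgoal for a b by (cases "Suc b = j")
        (auto simp: pmul_table special_intros, auto simp: rank_simps split: if_splits)
    subgoal for i by (cases "j = Suc i")
        (auto simp: pmul_table special_intros, auto simp: rank_simps split: if_splits)
    subgoal for i by (cases "j = i")
        (auto simp: pmul_table special_intros, auto simp: rank_simps split: if_splits)
    subgoal for i by (cases "j = i")
        (auto simp: pmul_table special_intros, auto simp: rank_simps split: if_splits)
    subgoal for i by (cases "j = Suc i")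
        (auto simp: pmul_table special_intros, auto simp: rank_simps split: if_splits)
    by (auto simp: pmul_table special_intros, auto simp: rank_simps split: if_splits)+
next
  fix j assume j: "1 \<le> j" "j \<le> n" and g: "g = chi_i_inv n j"
  from w[unfolded special_def] n j show ?thesis unfolding g
    apply (elim disjE exE conjE)
    subgoal for a b by (cases "b = j")
        (auto simp: pmul_table special_intros, auto simp: rank_simps split: if_splits)
    subgoal for i by (cases "j = i")
        (auto simp: pmul_table special_intros, auto simp: rank_simps split: if_splits)
    subgoal for i by (cases "i = Suc j")
        (auto simp: pmul_table special_intros, auto simp: rank_simps split: if_splits)
    subgoal for i by (cases "i = Suc j")
        (auto simp: pmul_table special_intros, auto simp: rank_simps split: if_splits)
    subgoal for i by (cases "j = i")
        (auto simp: pmul_table special_intros, auto simp: rank_simps split: if_splits)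
    by (auto simp: pmul_table special_intros, auto simp: rank_simps split: if_splits)+
next
  assume "g = chi n"
  with w[unfolded special_def] n show ?thesis by (elim disjE exE conjE) (auto simp: pmul_table special_intros, auto simp: rank_simps split: if_splits)
next
  assume "g = chi_inv n"
  with w[unfolded special_def] n show ?thesis by (elim disjE exE conjE) (auto simp: pmul_table special_intros, auto simp: rank_simps split: if_splits)
qed

lemma S_shape_pmul_letter:
  "2 \<le> n \<Longrightarrow> S_shape n w \<Longrightarrow> letter n g \<Longrightarrow> S_shape n (pmul w g)"
  using special_pmul_letter rank_le_one_pmul by (auto simp: S_shape_def)

lemma
  assumes "1 \<le> n"
  shows pinv_ac_shift: "pinv (ac_shift n a b) = ac_shift n b a"
    and pinv_chi_i: "pinv (chi_i n i) = chi_i_inv n i"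
    and pinv_chi_i_inv: "pinv (chi_i_inv n i) = chi_i n i"
    and pinv_chi_i_dom_id: "pinv (chi_i_dom_id n i) = chi_i_dom_id n i"
    and pinv_chi_i_ran_id: "pinv (chi_i_ran_id n i) = chi_i_ran_id n i"
    and pinv_chi: "pinv (chi n) = chi_inv n"
    and pinv_chi_inv: "pinv (chi_inv n) = chi n"
    and pinv_chi_dom_id: "pinv (chi_dom_id n) = chi_dom_id n"
    and pinv_chi_ran_id: "pinv (chi_ran_id n) = chi_ran_id n"
  using assms by (rule_tac pinv_eqI; auto simp: shape_defs)+

lemmas pinv_shapes = pinv_ac_shift pinv_chi_i pinv_chi_i_inv pinv_chi_i_dom_id pinv_chi_i_ran_id
  pinv_chi pinv_chi_inv pinv_chi_dom_id pinv_chi_ran_id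

lemma special_pinv: "1 \<le> n \<Longrightarrow> special n z \<Longrightarrow> special n (pinv z)"
  unfolding special_def by (elim disjE exE conjE) (auto simp: pinv_shapes)

lemma letter_pinv: "1 \<le> n \<Longrightarrow> letter n g \<Longrightarrow> letter n (pinv g)"
  unfolding letter_def by (elim disjE exE conjE) (auto simp: pinv_shapes)

lemma rank_le_one_pinv:
  assumes "rank_le_one z"
  shows "rank_le_one (pinv z)"
  unfolding rank_le_one_def
proof (intro allI impI)
  fix x y assume "pinv z x \<noteq> None" "pinv z y \<noteq> None"
  then have "x \<in> ran z" "y \<in> ran z" by (simp_all add: pinv_eq_None_iff)
  then obtain u v where "z u = Some x" "z v = Some y" by (auto simp: ran_def)
  moreover from this have "u = v" using assms by (auto simp: rank_le_one_def)
  ultimately show "x = y" by simp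
qed

lemma S_shape_pinv: "1 \<le> n \<Longrightarrow> S_shape n z \<Longrightarrow> S_shape n (pinv z)"
  using special_pinv rank_le_one_pinv by (auto simp: S_shape_def)

(* Two-sided, because inversion exchanges left and right multiplication. *)
definition shape_preserving :: "nat \<Rightarrow> pmap \<Rightarrow> bool" where
  "shape_preserving n a \<longleftrightarrow> (\<forall>w. S_shape n w \<longrightarrow> S_shape n (pmul w a) \<and> S_shape n (pmul a w))"

lemma shape_preserving_letter:
  assumes n: "2 \<le> n" and g: "letter n g"
  shows "shape_preserving n g"
  unfolding shape_preserving_def
proof (intro allI impI conjI)
  fix w assume w: "S_shape n w"
  show "S_shape n (pmul w g)" using S_shape_pmul_letter[OF n w g] .
  have inj: "inj_on w (dom w)" "inj_on g (dom g)"
    using inj_on_dom_S_shape[OF w] inj_on_dom_special[OF special_letter[OF g]] .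
  have "S_shape n (pmul (pinv w) (pinv g))"
    using n by (intro S_shape_pmul_letter S_shape_pinv letter_pinv w g) auto
  then have "S_shape n (pinv (pmul (pinv w) (pinv g)))" using n by (intro S_shape_pinv) auto
  then show "S_shape n (pmul g w)"
    by (simp add: pinv_pmul inj_on_dom_pinv pinv_pinv inj)
qed

lemma shape_preserving_pmul:
  "shape_preserving n a \<Longrightarrow> shape_preserving n b \<Longrightarrow> shape_preserving n (pmul a b)"
  unfolding shape_preserving_def by (metis pmul_assoc)

lemma shape_preserving_pinv:
  assumes n: "1 \<le> n" and a: "inj_on a (dom a)" "shape_preserving n a"
  shows "shape_preserving n (pinv a)"
  unfolding shape_preserving_def
proof (intro allI impI conjI)
  fix w assume w: "S_shape n w"
  have inj: "inj_on w (dom w)" using inj_on_dom_S_shape[OF w] .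
  have "S_shape n (pmul a (pinv w))" "S_shape n (pmul (pinv w) a)"
    using a(2) S_shape_pinv[OF n w] by (auto simp: shape_preserving_def)
  then have "S_shape n (pinv (pmul a (pinv w)))" "S_shape n (pinv (pmul (pinv w) a))"
    by (auto intro: S_shape_pinv[OF n])
  then show "S_shape n (pmul w (pinv a))" "S_shape n (pmul (pinv a) w)"
    by (simp_all add: pinv_pmul inj_on_dom_pinv pinv_pinv inj a(1))
qed

lemma S_shape_if_mem_S:
  assumes n: "2 \<le> n" and a: "a \<in> S n"
  shows "S_shape n a"
proof -
  have "S_shape n a \<and> shape_preserving n a"
    using a unfolding S_def
  proof (induction rule: inv_closure.induct)
    case (gen g)
    then have "letter n g" by (auto simp: letter_def)
    then show ?case
      using n special_letter shape_preserving_letter by (auto simp: S_shape_def)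
  next
    case (mul a b)
    then show ?case by (meson shape_preserving_def shape_preserving_pmul)
  next
    case (inv a)
    then show ?case
      using n inj_on_dom_S_shape by (auto intro: S_shape_pinv shape_preserving_pinv)
  qed
  then show ?thesis ..
qed

section \<open>Representations in direct powers of B_2^1\<close>

fun bact :: "B21 \<Rightarrow> bool \<Rightarrow> bool option" where
  "bact One z = Some z"
| "bact C z = (if z then Some False else None)"
| "bact D z = (if z then None else Some True)"
| "bact CD z = (if z then Some True else None)"
| "bact DC z = (if z then None else Some False)"
| "bact Zero z = None"

lemma bact_bmul: "bact (bmul x y) = bact y \<circ>\<^sub>m bact x"
proof
  fix z show "bact (bmul x y) z = (bact y \<circ>\<^sub>m bact x) z"
    by (cases x; cases y; cases z) (simp_all add: map_comp_def)
qed

lemma bact_binv: "bact (binv x) w = Some z \<longleftrightarrow> bact x z = Some w"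
  by (cases x; cases z; cases w) auto

lemma bact_inj: "bact x z = Some w \<Longrightarrow> bact x z' = Some w \<Longrightarrow> z = z'"
  by (cases x; cases z; cases z'; cases w) auto

definition represents :: "(nat \<Rightarrow> bool) set \<Rightarrow> pmap \<Rightarrow> ((nat \<Rightarrow> bool) \<Rightarrow> B21) \<Rightarrow> bool" where
  "represents K t \<beta> \<longleftrightarrow>
     (\<forall>\<kappa>\<in>K. \<forall>p q. t p = Some q \<longrightarrow> bact (\<beta> \<kappa>) (\<kappa> p) = Some (\<kappa> q))
     \<and> (\<forall>q. (\<forall>\<kappa>\<in>K. \<kappa> q \<in> dom (bact (\<beta> \<kappa>))) \<longrightarrow> q \<in> dom t)
     \<and> (\<forall>q. (\<forall>\<kappa>\<in>K. \<kappa> q \<in> ran (bact (\<beta> \<kappa>))) \<longrightarrow> q \<in> ran t)"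

lemma represents_pmul:
  assumes a: "represents K a \<beta>" and b: "represents K b \<gamma>"
  shows "represents K (pmul a b) (\<lambda>\<kappa>. bmul (\<beta> \<kappa>) (\<gamma> \<kappa>))"
  unfolding represents_def
proof (intro conjI allI impI ballI)
  fix \<kappa> p q assume "\<kappa> \<in> K" "pmul a b p = Some q"
  then show "bact (bmul (\<beta> \<kappa>) (\<gamma> \<kappa>)) (\<kappa> p) = Some (\<kappa> q)"
    using a b by (auto simp: represents_def bact_bmul pmul_def map_comp_Some_iff)
next
  fix q assume h: "\<forall>\<kappa>\<in>K. \<kappa> q \<in> dom (bact (bmul (\<beta> \<kappa>) (\<gamma> \<kappa>)))"
  then have "\<forall>\<kappa>\<in>K. \<kappa> q \<in> dom (bact (\<beta> \<kappa>))"
    by (auto simp: bact_bmul map_comp_def split: option.splits)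
  then have "q \<in> dom a" using a by (auto simp: represents_def)
  then obtain r where r: "a q = Some r" by blast
  then have "\<forall>\<kappa>\<in>K. \<kappa> r \<in> dom (bact (\<gamma> \<kappa>))"
    using a h by (auto simp: represents_def bact_bmul)
  then have "r \<in> dom b" using b by (auto simp: represents_def)
  with r show "q \<in> dom (pmul a b)" by (auto simp: pmul_def)
next
  fix q assume h: "\<forall>\<kappa>\<in>K. \<kappa> q \<in> ran (bact (bmul (\<beta> \<kappa>) (\<gamma> \<kappa>)))"
  then have "\<forall>\<kappa>\<in>K. \<kappa> q \<in> ran (bact (\<gamma> \<kappa>))"
    by (auto simp: bact_bmul ran_def map_comp_Some_iff)
  then have "q \<in> ran b" using b unfolding represents_def by blast
  then obtain r where r: "b r = Some q" by (auto simp: ran_def)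
  have "\<kappa> r \<in> ran (bact (\<beta> \<kappa>))" if \<kappa>: "\<kappa> \<in> K" for \<kappa>
  proof -
    obtain z w where "bact (\<beta> \<kappa>) z = Some w" "bact (\<gamma> \<kappa>) w = Some (\<kappa> q)"
      using h \<kappa> by (auto simp: bact_bmul ran_def map_comp_Some_iff)
    moreover have "bact (\<gamma> \<kappa>) (\<kappa> r) = Some (\<kappa> q)" using b \<kappa> r by (auto simp: represents_def)
    ultimately have "w = \<kappa> r" using bact_inj by blast
    with \<open>bact (\<beta> \<kappa>) z = Some w\<close> show ?thesis by (auto intro: ranI)
  qed
  then have "r \<in> ran a" using a unfolding represents_def by blast
  then obtain p where "a p = Some r" by (auto simp: ran_def)
  with r have "pmul a b p = Some q" by (simp add: pmul_def)
  then show "q \<in> ran (pmul a b)" by (rule ranI)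
qed

lemma represents_pinv:
  assumes a: "represents K a \<beta>" and inj: "inj_on a (dom a)"
  shows "represents K (pinv a) (\<lambda>\<kappa>. binv (\<beta> \<kappa>))"
  using a unfolding represents_def
  by (auto simp: pinv_eq_Some_iff[OF inj] bact_binv dom_def ran_def pinv_eq_None_iff[symmetric])

lemma represents_unique:
  assumes a: "represents K a \<beta>" and b: "represents K b \<beta>"
    and sep: "\<And>p q. p \<noteq> q \<Longrightarrow> \<exists>\<kappa>\<in>K. \<kappa> p \<noteq> \<kappa> q"
  shows "a = b"
proof -
  have *: "x p = y p" if x: "represents K x \<beta>" and y: "represents K y \<beta>" and "x p = Some q"
    for x y p q
  proof -
    have q: "\<forall>\<kappa>\<in>K. bact (\<beta> \<kappa>) (\<kappa> p) = Some (\<kappa> q)" using x \<open>x p = Some q\<close>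
      by (auto simp: represents_def)
    then have "\<forall>\<kappa>\<in>K. \<kappa> p \<in> dom (bact (\<beta> \<kappa>))" by blast
    then have "p \<in> dom y" using y unfolding represents_def by blast
    then obtain r where r: "y p = Some r" by blast
    then have "\<forall>\<kappa>\<in>K. bact (\<beta> \<kappa>) (\<kappa> p) = Some (\<kappa> r)" using y by (auto simp: represents_def)
    with q have "q = r" using sep by force
    with r \<open>x p = Some q\<close> show ?thesis by simp
  qed
  show ?thesis
    by (rule ext) (metis * a b not_Some_eq)
qed

lemma inv_closure_represented:
  assumes base: "\<forall>x\<in>X. inj_on x (dom x) \<and> (\<exists>\<beta>. represents K x \<beta>)"
  shows "t \<in> inv_closure X \<Longrightarrow> inj_on t (dom t) \<and> (\<exists>\<beta>. represents K t \<beta>)"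
proof (induction rule: inv_closure.induct)
  case (gen a) then show ?case using base by blast
next
  case (mul a b) then show ?case using inj_on_dom_pmul represents_pmul by blast
next
  case (inv a) then show ?case using inj_on_dom_pinv represents_pinv by blast
qed

lemma in_var_B21_if_represented:
  assumes base: "\<forall>x\<in>X. inj_on x (dom x) \<and> (\<exists>\<beta>. represents K x \<beta>)"
    and sep: "\<And>p q. p \<noteq> q \<Longrightarrow> \<exists>\<kappa>\<in>K. \<kappa> p \<noteq> \<kappa> q"
  shows "in_var_B21 (inv_closure X) pmul pinv"
  unfolding in_var_B21_def satisfies_def
proof (intro allI impI)
  fix s t :: trm and \<sigma> :: "nat \<Rightarrow> pmap"
  assume st: "\<forall>\<tau>. (\<forall>k. \<tau> k \<in> (UNIV :: B21 set)) \<longrightarrow> eval bmul binv \<tau> s = eval bmul binv \<tau> t"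
    and \<sigma>: "\<forall>k. \<sigma> k \<in> inv_closure X"
  have "\<forall>k. \<exists>\<beta>. represents K (\<sigma> k) \<beta>" using inv_closure_represented[OF base] \<sigma> by blast
  then obtain \<beta> where \<beta>: "\<And>k. represents K (\<sigma> k) (\<beta> k)" by metis
  have ev: "eval pmul pinv \<sigma> u \<in> inv_closure X
      \<and> represents K (eval pmul pinv \<sigma> u) (\<lambda>\<kappa>. eval bmul binv (\<lambda>k. \<beta> k \<kappa>) u)" for u
  proof (induction u)
    case (Var k) then show ?case using \<sigma> \<beta> by simp
  next
    case (Mul u1 u2) then show ?case using represents_pmul inv_closure.mul by simp
  next
    case (Inv u)
    then have "inj_on (eval pmul pinv \<sigma> u) (dom (eval pmul pinv \<sigma> u))"
      using inv_closure_represented[OF base] by blast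
    with Inv show ?case using represents_pinv inv_closure.inv by simp
  qed
  from st have "(\<lambda>\<kappa>. eval bmul binv (\<lambda>k. \<beta> k \<kappa>) s) = (\<lambda>\<kappa>. eval bmul binv (\<lambda>k. \<beta> k \<kappa>) t)"
    by auto
  then show "eval pmul pinv \<sigma> s = eval pmul pinv \<sigma> t"
    using represents_unique[OF _ _ sep] ev by metis
qed

definition colour_compatible :: "(nat \<Rightarrow> bool) \<Rightarrow> pmap \<Rightarrow> bool" where
  "colour_compatible \<kappa> x \<longleftrightarrow> (\<forall>p q. x p = Some q \<longrightarrow> \<kappa> p = \<kappa> q)
     \<or> (\<forall>p q. x p = Some q \<longrightarrow> \<kappa> p \<and> \<not> \<kappa> q)
     \<or> (\<forall>p q. x p = Some q \<longrightarrow> \<not> \<kappa> p \<and> \<kappa> q)"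

(* The element of B_2^1 whose graph is the image of the graph of x under the colouring. *)
definition colour_label :: "(nat \<Rightarrow> bool) \<Rightarrow> pmap \<Rightarrow> B21" where
  "colour_label \<kappa> x =
     (let TT = (\<exists>p q. x p = Some q \<and> \<kappa> p \<and> \<kappa> q);
          FF = (\<exists>p q. x p = Some q \<and> \<not> \<kappa> p \<and> \<not> \<kappa> q);
          TF = (\<exists>p q. x p = Some q \<and> \<kappa> p \<and> \<not> \<kappa> q);
          FT = (\<exists>p q. x p = Some q \<and> \<not> \<kappa> p \<and> \<kappa> q)
      in if TF then C else if FT then D
         else if TT then (if FF then One else CD) else if FF then DC else Zero)"

lemma bact_colour_label:
  assumes "colour_compatible \<kappa> x"
  shows "bact (colour_label \<kappa> x) z = Some w \<longleftrightarrow> (\<exists>p q. x p = Some q \<and> \<kappa> p = z \<and> \<kappa> q = w)"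
proof -
  define TT where "TT = (\<exists>p q. x p = Some q \<and> \<kappa> p \<and> \<kappa> q)"
  define FF where "FF = (\<exists>p q. x p = Some q \<and> \<not> \<kappa> p \<and> \<not> \<kappa> q)"
  define TF where "TF = (\<exists>p q. x p = Some q \<and> \<kappa> p \<and> \<not> \<kappa> q)"
  define FT where "FT = (\<exists>p q. x p = Some q \<and> \<not> \<kappa> p \<and> \<kappa> q)"
  have "(\<exists>p q. x p = Some q \<and> \<kappa> p = z \<and> \<kappa> q = w) =
      (if z then (if w then TT else TF) else (if w then FT else FF))"
    unfolding TT_def FF_def TF_def FT_def by (cases z; cases w) auto
  moreover have "(\<not> TF \<and> \<not> FT) \<or> (\<not> TT \<and> \<not> FF \<and> \<not> FT) \<or> (\<not> TT \<and> \<not> FF \<and> \<not> TF)"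
    using assms unfolding colour_compatible_def TT_def FF_def TF_def FT_def by blast
  ultimately show ?thesis
    unfolding colour_label_def Let_def TT_def[symmetric] FF_def[symmetric] TF_def[symmetric]
      FT_def[symmetric]
    by (cases TT; cases FF; cases TF; cases FT; cases z; cases w) simp_all
qed

definition separates :: "(nat \<Rightarrow> bool) set \<Rightarrow> nat set \<Rightarrow> nat \<Rightarrow> bool" where
  "separates K P q \<longleftrightarrow> (\<exists>\<kappa>\<in>K. \<forall>p\<in>P. \<kappa> p \<noteq> \<kappa> q)"

lemma represents_colour_label:
  assumes comp: "\<forall>\<kappa>\<in>K. colour_compatible \<kappa> x"
    and dom: "\<And>q. q \<notin> dom x \<Longrightarrow> separates K (dom x) q"
    and ran: "\<And>q. q \<notin> ran x \<Longrightarrow> separates K (ran x) q"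
  shows "represents K x (\<lambda>\<kappa>. colour_label \<kappa> x)"
  unfolding represents_def
proof (intro conjI allI impI ballI)
  fix \<kappa> p q assume "\<kappa> \<in> K" "x p = Some q"
  then show "bact (colour_label \<kappa> x) (\<kappa> p) = Some (\<kappa> q)" using comp bact_colour_label by blast
next
  fix q assume h: "\<forall>\<kappa>\<in>K. \<kappa> q \<in> dom (bact (colour_label \<kappa> x))"
  show "q \<in> dom x"
  proof (rule ccontr)
    assume "q \<notin> dom x"
    then obtain \<kappa> where \<kappa>: "\<kappa> \<in> K" "\<forall>p\<in>dom x. \<kappa> p \<noteq> \<kappa> q"
      using dom unfolding separates_def by blast
    with h obtain w where "bact (colour_label \<kappa> x) (\<kappa> q) = Some w" by blast
    then show False using \<kappa> comp bact_colour_label by blast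
  qed
next
  fix q assume h: "\<forall>\<kappa>\<in>K. \<kappa> q \<in> ran (bact (colour_label \<kappa> x))"
  show "q \<in> ran x"
  proof (rule ccontr)
    assume "q \<notin> ran x"
    then obtain \<kappa> where \<kappa>: "\<kappa> \<in> K" "\<forall>p\<in>ran x. \<kappa> p \<noteq> \<kappa> q"
      using ran unfolding separates_def by blast
    with h obtain z where "bact (colour_label \<kappa> x) z = Some (\<kappa> q)" by (auto simp: ran_def)
    then show False using \<kappa> comp bact_colour_label by (blast intro: ranI)
  qed
qed

lemma separatesI: "\<kappa> \<in> K \<Longrightarrow> (\<And>p. p \<in> P \<Longrightarrow> \<kappa> p \<noteq> \<kappa> q) \<Longrightarrow> separates K P q"
  unfolding separates_def by blast

lemma separates_subsingleton:
  assumes "\<And>p q. p \<noteq> q \<Longrightarrow> \<exists>\<kappa>\<in>K. \<kappa> p \<noteq> \<kappa> q" "K \<noteq> {}"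
    and "\<forall>p\<in>P. \<forall>p'\<in>P. p = p'" "q \<notin> P"
  shows "separates K P q"
proof (cases "P = {}")
  case False
  with assms(3) obtain p where "P = {p}" by blast
  with assms(1,4) show ?thesis by (auto simp: separates_def)
qed (use assms(2) in \<open>auto simp: separates_def\<close>)

section \<open>Colourings adapted to S_n\<close>

lemma
  assumes "1 \<le> n"
  shows graph_ac_shift: "Map.graph (ac_shift n a b) = {(a, b), (2*n+2+a, 2*n+2+b)}"
    and graph_chi_i:
      "1 \<le> i \<Longrightarrow> Map.graph (chi_i n i) = {(i-1, i), (n+1+i, n+i), (2*n+1+i, 2*n+2+i)}"
    and graph_chi_i_inv:
      "1 \<le> i \<Longrightarrow> Map.graph (chi_i_inv n i) = {(i, i-1), (n+i, n+1+i), (2*n+2+i, 2*n+1+i)}"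
    and graph_chi_i_dom_id: "1 \<le> i \<Longrightarrow>
      Map.graph (chi_i_dom_id n i) = {(i-1, i-1), (n+1+i, n+1+i), (2*n+1+i, 2*n+1+i)}"
    and graph_chi_i_ran_id:
      "1 \<le> i \<Longrightarrow> Map.graph (chi_i_ran_id n i) = {(i, i), (n+i, n+i), (2*n+2+i, 2*n+2+i)}"
    and graph_chi: "Map.graph (chi n) = {(n, 2*n+1), (n+1, 2*n+2)}"
    and graph_chi_inv: "Map.graph (chi_inv n) = {(2*n+1, n), (2*n+2, n+1)}"
    and graph_chi_dom_id: "Map.graph (chi_dom_id n) = {(n, n), (n+1, n+1)}"
    and graph_chi_ran_id: "Map.graph (chi_ran_id n) = {(2*n+1, 2*n+1), (2*n+2, 2*n+2)}"
  using assms by (auto simp: shape_defs graph_fun_upd_None)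

lemmas graph_shapes = graph_ac_shift graph_chi_i graph_chi_i_inv graph_chi_i_dom_id
  graph_chi_i_ran_id graph_chi graph_chi_inv graph_chi_dom_id graph_chi_ran_id

lemma
  assumes "1 \<le> n"
  shows dom_ac_shift: "dom (ac_shift n a b) = {a, 2*n+2+a}"
    and ran_ac_shift: "ran (ac_shift n a b) = {b, 2*n+2+b}"
    and dom_chi_i: "1 \<le> i \<Longrightarrow> dom (chi_i n i) = {i-1, n+1+i, 2*n+1+i}"
    and ran_chi_i: "1 \<le> i \<Longrightarrow> ran (chi_i n i) = {i, n+i, 2*n+2+i}"
    and dom_chi_i_inv: "1 \<le> i \<Longrightarrow> dom (chi_i_inv n i) = {i, n+i, 2*n+2+i}"
    and ran_chi_i_inv: "1 \<le> i \<Longrightarrow> ran (chi_i_inv n i) = {i-1, n+1+i, 2*n+1+i}"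
    and dom_chi_i_dom_id: "1 \<le> i \<Longrightarrow> dom (chi_i_dom_id n i) = {i-1, n+1+i, 2*n+1+i}"
    and ran_chi_i_dom_id: "1 \<le> i \<Longrightarrow> ran (chi_i_dom_id n i) = {i-1, n+1+i, 2*n+1+i}"
    and dom_chi_i_ran_id: "1 \<le> i \<Longrightarrow> dom (chi_i_ran_id n i) = {i, n+i, 2*n+2+i}"
    and ran_chi_i_ran_id: "1 \<le> i \<Longrightarrow> ran (chi_i_ran_id n i) = {i, n+i, 2*n+2+i}"
    and dom_chi: "dom (chi n) = {n, n+1}"
    and ran_chi: "ran (chi n) = {2*n+1, 2*n+2}"
    and dom_chi_inv: "dom (chi_inv n) = {2*n+1, 2*n+2}"
    and ran_chi_inv: "ran (chi_inv n) = {n, n+1}"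
    and dom_chi_dom_id: "dom (chi_dom_id n) = {n, n+1}"
    and ran_chi_dom_id: "ran (chi_dom_id n) = {n, n+1}"
    and dom_chi_ran_id: "dom (chi_ran_id n) = {2*n+1, 2*n+2}"
    and ran_chi_ran_id: "ran (chi_ran_id n) = {2*n+1, 2*n+2}"
  using assms by (simp_all add: fst_graph_eq_dom[symmetric] snd_graph_ran[symmetric] graph_shapes)

lemma
  assumes "1 \<le> n" "1 \<le> i" "i \<le> n" "1 \<le> k"
  shows chi_i_eq_iff: "chi_i n i = chi_i n k \<longleftrightarrow> i = k"
    and chi_i_inv_eq_iff: "chi_i_inv n i = chi_i_inv n k \<longleftrightarrow> i = k"
    and chi_i_neq_chi_i_inv: "chi_i n i \<noteq> chi_i_inv n k"
proof -
  have "(i - 1, i) \<notin> Map.graph (chi_i_inv n k)" "(i, i - 1) \<notin> Map.graph (chi_i_inv n k) \<or> i = k"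
    "(i - 1, i) \<notin> Map.graph (chi_i n k) \<or> i = k"
    using assms by (auto simp: graph_chi_i graph_chi_i_inv)
  moreover have "(i - 1, i) \<in> Map.graph (chi_i n i)" "(i, i - 1) \<in> Map.graph (chi_i_inv n i)"
    using assms by (auto simp: graph_chi_i graph_chi_i_inv)
  ultimately show "chi_i n i = chi_i n k \<longleftrightarrow> i = k" "chi_i_inv n i = chi_i_inv n k \<longleftrightarrow> i = k"
    "chi_i n i \<noteq> chi_i_inv n k"
    by metis+
qed

lemma ball_graph_iff: "(\<forall>(p, q)\<in>Map.graph x. P p q) \<longleftrightarrow> (\<forall>p q. x p = Some q \<longrightarrow> P p q)"
proof
  assume h: "\<forall>(p, q)\<in>Map.graph x. P p q"
  show "\<forall>p q. x p = Some q \<longrightarrow> P p q"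
  proof (intro allI impI)
    fix p q assume "x p = Some q"
    then have "(p, q) \<in> Map.graph x" by (rule in_graphI)
    with h show "P p q" by blast
  qed
qed (auto dest: in_graphD)

lemma colour_compatible_iff_graph:
  "colour_compatible \<kappa> x \<longleftrightarrow> (\<forall>(p, q)\<in>Map.graph x. \<kappa> p = \<kappa> q)
     \<or> (\<forall>(p, q)\<in>Map.graph x. \<kappa> p \<and> \<not> \<kappa> q) \<or> (\<forall>(p, q)\<in>Map.graph x. \<not> \<kappa> p \<and> \<kappa> q)"
  unfolding colour_compatible_def ball_graph_iff ..

(* The points l, n+1+l and 2n+2+l (l \<le> n) are position l on three tracks. The letters act
   on the tracks in parallel: chi_i moves position i-1 to i on the outer tracks and i to i-1 on
   the middle one, and chi joins the tracks at their ends. *)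
definition flip_colouring :: "nat \<Rightarrow> (nat \<Rightarrow> bool) \<Rightarrow> nat \<Rightarrow> bool" where
  "flip_colouring n \<alpha> p =
     (if p \<le> n then \<alpha> p else if p \<le> 2*n+1 then \<not> \<alpha> (p - (n+1)) else \<alpha> (p - (2*n+2)))"

definition cut_colouring :: "nat \<Rightarrow> nat \<Rightarrow> nat \<Rightarrow> bool" where
  "cut_colouring n k p \<longleftrightarrow> p \<le> n \<or> (n < p \<and> p \<le> 2*n+1 \<and> p - (n+1) < k)"

definition index_colouring :: "nat \<Rightarrow> nat \<Rightarrow> nat \<Rightarrow> bool" where
  "index_colouring n k p \<longleftrightarrow>
     (if p \<le> n then p < k else if p \<le> 2*n+1 then p - (n+1) < k else p - (2*n+2) < k)"

lemma colour_compatible_rank_le_one: "rank_le_one x \<Longrightarrow> colour_compatible \<kappa> x"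
  unfolding colour_compatible_def rank_le_one_def by (metis option.distinct(1) option.inject)

lemma colour_compatible_point:
  "1 \<le> n \<Longrightarrow> 3*n+2 < m \<Longrightarrow> special n x \<Longrightarrow> colour_compatible (\<lambda>p. p = m) x"
  unfolding special_def colour_compatible_iff_graph
  by (elim disjE exE conjE) (auto simp: graph_shapes)

lemma colour_compatible_cut:
  "1 \<le> k \<Longrightarrow> k \<le> n \<Longrightarrow> x \<noteq> chi_i n k \<Longrightarrow> x \<noteq> chi_i_inv n k \<Longrightarrow> special n x
   \<Longrightarrow> colour_compatible (cut_colouring n k) x"
  unfolding special_def colour_compatible_iff_graph
  by (elim disjE exE conjE)
    (auto simp: graph_shapes cut_colouring_def chi_i_eq_iff chi_i_inv_eq_iff)

lemma colour_compatible_index: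
  "1 \<le> k \<Longrightarrow> k \<le> n \<Longrightarrow> x \<noteq> chi_i n k \<Longrightarrow> x \<noteq> chi_i_inv n k \<Longrightarrow> special n x
   \<Longrightarrow> colour_compatible (index_colouring n k) x"
  unfolding special_def colour_compatible_iff_graph
  by (elim disjE exE conjE)
    (auto simp: graph_shapes index_colouring_def chi_i_eq_iff chi_i_inv_eq_iff)

lemma colour_compatible_flip:
  "1 \<le> n \<Longrightarrow> \<alpha> 0 \<noteq> \<alpha> n \<Longrightarrow> special n x \<Longrightarrow> colour_compatible (flip_colouring n \<alpha>) x"
  unfolding special_def colour_compatible_iff_graph
  by (elim disjE exE conjE) (auto simp: graph_shapes flip_colouring_def)

definition free_index :: "nat \<Rightarrow> pmap set \<Rightarrow> nat \<Rightarrow> bool" where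
  "free_index n X k \<longleftrightarrow> 1 \<le> k \<and> k \<le> n \<and> chi_i n k \<notin> X \<and> chi_i_inv n k \<notin> X"

definition colourings :: "nat \<Rightarrow> pmap set \<Rightarrow> (nat \<Rightarrow> bool) set" where
  "colourings n X = {flip_colouring n \<alpha> | \<alpha>. \<alpha> 0 \<noteq> \<alpha> n}
     \<union> {cut_colouring n k | k. free_index n X k} \<union> {index_colouring n k | k. free_index n X k}
     \<union> {(\<lambda>p. p = m) | m. 3*n+2 < m}"

lemma
  shows flip_colouring_mem: "\<alpha> 0 \<noteq> \<alpha> n \<Longrightarrow> flip_colouring n \<alpha> \<in> colourings n X"
    and cut_colouring_mem: "free_index n X k \<Longrightarrow> cut_colouring n k \<in> colourings n X"
    and index_colouring_mem: "free_index n X k \<Longrightarrow> index_colouring n k \<in> colourings n X"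
    and point_colouring_mem: "3*n+2 < m \<Longrightarrow> (\<lambda>p. p = m) \<in> colourings n X"
  unfolding colourings_def by blast+

lemma colour_compatible_colourings:
  assumes n: "1 \<le> n" and x: "x \<in> X" "S_shape n x" and \<kappa>: "\<kappa> \<in> colourings n X"
  shows "colour_compatible \<kappa> x"
proof (cases "special n x")
  case False
  with x show ?thesis by (auto simp: S_shape_def intro: colour_compatible_rank_le_one)
next
  case True
  with x have "x \<noteq> chi_i n k \<and> x \<noteq> chi_i_inv n k" if "free_index n X k" for k
    using that by (auto simp: free_index_def)
  with \<kappa> show ?thesis
    unfolding colourings_def
    using colour_compatible_flip[OF n _ True] colour_compatible_cut[OF _ _ _ _ True]
      colour_compatible_index[OF _ _ _ _ True]
      colour_compatible_point[OF n _ True]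
    by (auto simp: free_index_def)
qed

lemma free_index_in:
  assumes "finite X" "I \<subseteq> {1..n}" "card X < card I"
  shows "\<exists>k\<in>I. free_index n X k"
proof (rule ccontr)
  assume "\<not> ?thesis"
  then have blocked: "chi_i n k \<in> X \<or> chi_i_inv n k \<in> X" if "k \<in> I" for k
    using that assms(2) by (force simp: free_index_def)
  define f where "f k = (if chi_i n k \<in> X then chi_i n k else chi_i_inv n k)" for k
  have "f ` I \<subseteq> X" using blocked by (auto simp: f_def)
  moreover have "inj_on f I"
  proof (rule inj_onI)
    fix k k' assume "k \<in> I" "k' \<in> I" "f k = f k'"
    moreover from this have "1 \<le> k" "k \<le> n" "1 \<le> k'" "k' \<le> n" using assms(2) by auto
    ultimately show "k = k'"
      by (auto simp: f_def chi_i_eq_iff chi_i_inv_eq_iff chi_i_neq_chi_i_inv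
          chi_i_neq_chi_i_inv[symmetric] split: if_splits)
  qed
  ultimately have "card I \<le> card X" using assms(1) by (metis card_inj_on_le)
  with assms(3) show False by simp
qed

lemma free_index_exists:
  "finite X \<Longrightarrow> card X < n \<Longrightarrow> \<exists>k. free_index n X k"
  using free_index_in[of X "{1..n}" n] by auto

lemma free_index_other:
  assumes fin: "finite X" and card: "card X < n" and x: "x \<in> X" and i: "1 \<le> i" "i \<le> n"
    and shape: "x \<in> {chi_i n i, chi_i_inv n i, chi_i_dom_id n i, chi_i_ran_id n i}"
  shows "\<exists>k. free_index n X k \<and> k \<noteq> i"
proof (cases "x = chi_i n i \<or> x = chi_i_inv n i")
  case True
  with x free_index_exists[OF fin card] show ?thesis by (auto simp: free_index_def)
next
  case False
  \<comment> \<open>Then \<open>x\<close> has a fixed point and letters have none, so \<open>x\<close> blocks no index.\<close>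
  with shape have "x (2*n+1+i) = Some (2*n+1+i) \<or> x (2*n+2+i) = Some (2*n+2+i)"
    by (auto simp: chi_i_dom_id_def chi_i_ran_id_def)
  then obtain p where "x p = Some p" by blast
  moreover have "chi_i n k p \<noteq> Some p" "chi_i_inv n k p \<noteq> Some p" if "1 \<le> k" for k
    using that by (auto simp: chi_i_def chi_i_inv_def)
  ultimately have not_letter: "x \<noteq> chi_i n k \<and> x \<noteq> chi_i_inv n k" if "1 \<le> k" for k
    using that by auto
  have "0 < card X" using fin x by (auto simp: card_gt_0_iff)
  then have "card (X - {x}) < card ({1..n} - {i})" using fin x i card by simp
  then obtain k where "k \<in> {1..n} - {i}" "free_index n (X - {x}) k"
    using free_index_in[of "X - {x}" "{1..n} - {i}" n] fin by blast
  then show ?thesis using not_letter by (auto simp: free_index_def)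
qed

lemma flip_assignment_exists:
  fixes T F :: "nat set"
  assumes "0 < n" "T \<inter> F = {}" "\<not> {0, n} \<subseteq> T" "\<not> {0, n} \<subseteq> F"
  shows "\<exists>\<alpha>. \<alpha> 0 \<noteq> \<alpha> n \<and> (\<forall>x\<in>T. \<alpha> x) \<and> (\<forall>x\<in>F. \<not> \<alpha> x)"
proof -
  consider "0 \<in> T" | "0 \<in> F" | "0 \<notin> T \<union> F" "n \<in> T" | "0 \<notin> T \<union> F" "n \<notin> T" by blast
  then show ?thesis
  proof cases
    case 2
    then show ?thesis using assms by (intro exI[of _ "\<lambda>x. x \<in> T \<or> x = n"]) auto
  next
    case 4
    then show ?thesis using assms by (intro exI[of _ "\<lambda>x. x \<in> T \<or> x = 0"]) auto
  qed (use assms in \<open>auto intro!: exI[of _ "\<lambda>x. x \<in> T"]\<close>)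
qed

lemma index_cases:
  fixes q n :: nat
  obtains (AC) l where "q = l \<or> q = 2*n+2+l" "l \<le> n" | (B) l where "q = n+1+l" "l \<le> n"
    | (outside) "3*n+2 < q"
proof -
  consider "q \<le> n" | "n < q \<and> q \<le> 2*n+1" | "2*n+1 < q \<and> q \<le> 3*n+2" | "3*n+2 < q" by linarith
  then show ?thesis
  proof cases
    case 1 then show ?thesis using that(1)[of q] by auto
  next
    case 2 then show ?thesis using that(2)[of "q - (n+1)"] by auto
  next
    case 3 then show ?thesis using that(1)[of "q - (2*n+2)"] by auto
  next
    case 4 then show ?thesis using that(3) by auto
  qed
qed

context
  fixes n :: nat and X :: "pmap set"
  assumes n: "2 \<le> n" and free: "\<exists>k. free_index n X k"
begin

lemma separates_outside:
  "3*n+2 < q \<Longrightarrow> P \<subseteq> {..3*n+2} \<Longrightarrow> separates (colourings n X) P q"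
  by (rule separatesI[OF point_colouring_mem]) auto

(* Most separations use a flip colouring. The constraint on \<alpha> makes this fail exactly when 0 and
   n are required to get the same colour; those cases use a colouring attached to a free index. *)
lemma separates_flipI:
  assumes "0 < n" "T \<inter> F = {}" "\<not> {0, n} \<subseteq> T" "\<not> {0, n} \<subseteq> F"
    and "\<And>\<alpha>. \<alpha> 0 \<noteq> \<alpha> n \<Longrightarrow> (\<forall>x\<in>T. \<alpha> x) \<Longrightarrow> (\<forall>x\<in>F. \<not> \<alpha> x)
      \<Longrightarrow> \<forall>p\<in>P. flip_colouring n \<alpha> p \<noteq> flip_colouring n \<alpha> q"
  shows "separates (colourings n X) P q"
  using flip_assignment_exists[OF assms(1-4)] assms(5)
  by (metis flip_colouring_mem separates_def)

lemma separates_ac_pair: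
  assumes a: "a \<le> n" and q: "q \<notin> {a, 2*n+2+a}"
  shows "separates (colourings n X) {a, 2*n+2+a} q"
proof (cases q rule: index_cases[of _ n])
  case (AC l)
  with q have "l \<noteq> a" by auto
  then show ?thesis
    by (intro separates_flipI[of "{a}" "{l}"]) (use n a AC in \<open>auto simp: flip_colouring_def\<close>)
next
  case (B l)
  show ?thesis
  proof (cases "{0, n} \<subseteq> {a, l}")
    case False
    then show ?thesis
      by (intro separates_flipI[of "{a, l}" "{}"]) (use n a B in \<open>auto simp: flip_colouring_def\<close>)
  next
    case True
    obtain k where k: "free_index n X k" using free by blast
    from True k show ?thesis
      by (intro separatesI[OF index_colouring_mem[OF k]])
        (use n a B in \<open>auto simp: index_colouring_def free_index_def\<close>)
  qed
next
  case outside
  with a show ?thesis by (intro separates_outside) auto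
qed

lemma separates_block:
  assumes ab: "a \<le> n" "b \<le> n" "a = Suc b \<or> b = Suc a" and q: "q \<notin> {a, n+1+b, 2*n+2+a}"
    and other: "\<exists>k. free_index n X k \<and> k \<noteq> max a b"
  shows "separates (colourings n X) {a, n+1+b, 2*n+2+a} q"
proof (cases q rule: index_cases[of _ n])
  case (AC l)
  with q have "l \<noteq> a" by auto
  show ?thesis
  proof (cases "{0, n} \<subseteq> {b, l}")
    case False
    with \<open>l \<noteq> a\<close> show ?thesis
      by (intro separates_flipI[of "{b, l}" "{a}"]) (use n ab AC in \<open>auto simp: flip_colouring_def\<close>)
  next
    case True
    obtain k where k: "free_index n X k" "k \<noteq> max a b" using other by blast
    from True k show ?thesis
      by (intro separatesI[OF index_colouring_mem[OF k(1)]])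
        (use n ab AC in \<open>auto simp: index_colouring_def free_index_def\<close>)
  qed
next
  case (B l)
  with q have "l \<noteq> b" by auto
  show ?thesis
  proof (cases "{0, n} \<subseteq> {a, l}")
    case False
    with \<open>l \<noteq> b\<close> show ?thesis
      by (intro separates_flipI[of "{a, l}" "{b}"]) (use n ab B in \<open>auto simp: flip_colouring_def\<close>)
  next
    case True
    obtain k where k: "free_index n X k" "k \<noteq> max a b" using other by blast
    from True k show ?thesis
      by (intro separatesI[OF index_colouring_mem[OF k(1)]])
        (use n ab B in \<open>auto simp: index_colouring_def free_index_def\<close>)
  qed
next
  case outside
  with ab show ?thesis by (intro separates_outside) auto
qed

lemma separates_b_point:
  assumes l: "l \<le> n" and q: "q \<noteq> n+1+l"
  shows "separates (colourings n X) {n+1+l} q"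
proof (cases q rule: index_cases[of _ n])
  case (AC m)
  show ?thesis
  proof (cases "{0, n} \<subseteq> {l, m}")
    case False
    then show ?thesis
      by (intro separates_flipI[of "{l, m}" "{}"]) (use n l AC in \<open>auto simp: flip_colouring_def\<close>)
  next
    case True
    obtain k where k: "free_index n X k" using free by blast
    from True k show ?thesis
      by (intro separatesI[OF index_colouring_mem[OF k]])
        (use n l AC in \<open>auto simp: index_colouring_def free_index_def\<close>)
  qed
next
  case (B m)
  with q have "m \<noteq> l" by auto
  then show ?thesis
    by (intro separates_flipI[of "{l}" "{m}"]) (use n l B in \<open>auto simp: flip_colouring_def\<close>)
next
  case outside
  with l show ?thesis by (intro separates_outside) auto
qed

lemma separates_chi_dom:
  assumes q: "q \<notin> {n, n+1}"
  shows "separates (colourings n X) {n, n+1} q"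
proof (cases q rule: index_cases[of _ n])
  case (AC l)
  show ?thesis
  proof (cases "l = n")
    case True
    obtain k where k: "free_index n X k" using free by blast
    from True AC q k show ?thesis
      by (intro separatesI[OF cut_colouring_mem[OF k]])
        (auto simp: cut_colouring_def free_index_def)
  next
    case False
    then show ?thesis
      by (intro separates_flipI[of "{n}" "{l}"]) (use n AC in \<open>auto simp: flip_colouring_def\<close>)
  qed
next
  case (B l)
  with q have "l \<noteq> 0" by auto
  then show ?thesis
    by (intro separates_flipI[of "{n, l}" "{}"]) (use n B in \<open>auto simp: flip_colouring_def\<close>)
next
  case outside
  then show ?thesis by (intro separates_outside) auto
qed

lemma separates_chi_ran:
  assumes q: "q \<notin> {2*n+1, 2*n+2}"
  shows "separates (colourings n X) {2*n+1, 2*n+2} q"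
proof (cases q rule: index_cases[of _ n])
  case (AC l)
  show ?thesis
  proof (cases "l = 0")
    case True
    obtain k where k: "free_index n X k" using free by blast
    from True AC q k show ?thesis
      by (intro separatesI[OF cut_colouring_mem[OF k]])
        (auto simp: cut_colouring_def free_index_def)
  next
    case False
    then show ?thesis
      by (intro separates_flipI[of "{0}" "{l}"]) (use n AC in \<open>auto simp: flip_colouring_def\<close>)
  qed
next
  case (B l)
  with q have "l \<noteq> n" by auto
  then show ?thesis
    by (intro separates_flipI[of "{0, l}" "{}"]) (use n B in \<open>auto simp: flip_colouring_def\<close>)
next
  case outside
  then show ?thesis by (intro separates_outside) auto
qed

lemma separates_points:
  assumes "p \<noteq> q"
  shows "\<exists>\<kappa>\<in>colourings n X. \<kappa> p \<noteq> \<kappa> q"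
proof (cases p rule: index_cases[of _ n])
  case (AC a)
  show ?thesis
  proof (cases "q \<in> {a, 2*n+2+a}")
    case True
    obtain k where k: "free_index n X k" using free by blast
    have "cut_colouring n k p \<noteq> cut_colouring n k q"
      using AC True assms by (auto simp: cut_colouring_def)
    with cut_colouring_mem[OF k] show ?thesis by blast
  next
    case False
    with separates_ac_pair[OF AC(2)] obtain \<kappa>
      where \<kappa>: "\<kappa> \<in> colourings n X" "\<forall>p\<in>{a, 2*n+2+a}. \<kappa> p \<noteq> \<kappa> q"
      unfolding separates_def by blast
    show ?thesis by (rule bexI[OF _ \<kappa>(1)]) (use \<kappa>(2) AC(1) in auto)
  qed
next
  case (B l)
  with assms separates_b_point[OF B(2), of q] obtain \<kappa>
    where \<kappa>: "\<kappa> \<in> colourings n X" "\<kappa> (n+1+l) \<noteq> \<kappa> q"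
    unfolding separates_def by blast
  show ?thesis by (rule bexI[OF _ \<kappa>(1)]) (use \<kappa>(2) B(1) in auto)
next
  case outside
  show ?thesis by (rule bexI[OF _ point_colouring_mem[OF outside]]) (use assms in auto)
qed

lemma
  assumes i: "1 \<le> i" "i \<le> n" and other: "\<exists>k. free_index n X k \<and> k \<noteq> i"
  shows separates_lower_block:
      "q \<notin> {i-1, n+1+i, 2*n+1+i} \<Longrightarrow> separates (colourings n X) {i-1, n+1+i, 2*n+1+i} q"
    and separates_upper_block:
      "q \<notin> {i, n+i, 2*n+2+i} \<Longrightarrow> separates (colourings n X) {i, n+i, 2*n+2+i} q"
proof -
  have "{i-1, n+1+i, 2*n+1+i} = {i-1, n+1+i, 2*n+2+(i-1)}" "{i, n+i, 2*n+2+i} = {i, n+1+(i-1), 2*n+2+i}"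
    using i by auto
  with separates_block[of "i-1" i] separates_block[of i "i-1"] i other
  show "q \<notin> {i-1, n+1+i, 2*n+1+i} \<Longrightarrow> separates (colourings n X) {i-1, n+1+i, 2*n+1+i} q"
    "q \<notin> {i, n+i, 2*n+2+i} \<Longrightarrow> separates (colourings n X) {i, n+i, 2*n+2+i} q"
    by auto
qed

end

context
  fixes n :: nat and X :: "pmap set"
  assumes n: "2 \<le> n" and fin: "finite X" and card: "card X < n"
begin

lemma free: "\<exists>k. free_index n X k"
  using free_index_exists[OF fin card] .

lemma separates_dom_ran_index_shape:
  assumes x: "x \<in> X" and i: "1 \<le> i" "i \<le> n"
    and shape: "x \<in> {chi_i n i, chi_i_inv n i, chi_i_dom_id n i, chi_i_ran_id n i}"
  shows "(q \<notin> dom x \<longrightarrow> separates (colourings n X) (dom x) q)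
    \<and> (q \<notin> ran x \<longrightarrow> separates (colourings n X) (ran x) q)"
proof -
  have other: "\<exists>k. free_index n X k \<and> k \<noteq> i"
    using free_index_other[OF fin card x i shape] .
  let ?blocks = "{{i-1, n+1+i, 2*n+1+i}, {i, n+i, 2*n+2+i}}"
  have n1: "1 \<le> n" using n by simp
  have "dom x \<in> ?blocks \<and> ran x \<in> ?blocks"
    using shape by (elim insertE emptyE)
      (simp_all only: dom_chi_i[OF n1 i(1)] ran_chi_i[OF n1 i(1)] dom_chi_i_inv[OF n1 i(1)]
        ran_chi_i_inv[OF n1 i(1)] dom_chi_i_dom_id[OF n1 i(1)] ran_chi_i_dom_id[OF n1 i(1)]
        dom_chi_i_ran_id[OF n1 i(1)] ran_chi_i_ran_id[OF n1 i(1)] insert_iff simp_thms)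
  moreover have "q \<notin> P \<longrightarrow> separates (colourings n X) P q" if "P \<in> ?blocks" for P
    using that separates_lower_block[OF n free i other] separates_upper_block[OF n free i other]
    by blast
  ultimately show ?thesis by blast
qed

lemma separates_dom_ran_special:
  assumes x: "x \<in> X" "special n x"
  shows "(q \<notin> dom x \<longrightarrow> separates (colourings n X) (dom x) q)
    \<and> (q \<notin> ran x \<longrightarrow> separates (colourings n X) (ran x) q)"
proof -
  have n1: "1 \<le> n" using n by simp
  consider (ac) a b where "a \<le> n" "b \<le> n" "x = ac_shift n a b"
    | (index) i where "1 \<le> i" "i \<le> n"
        "x \<in> {chi_i n i, chi_i_inv n i, chi_i_dom_id n i, chi_i_ran_id n i}"
    | (chi) "x \<in> {chi n, chi_inv n, chi_dom_id n, chi_ran_id n}"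
    using x(2) unfolding special_def by blast
  then show ?thesis
  proof cases
    case ac
    have "dom x = {a, 2*n+2+a}" "ran x = {b, 2*n+2+b}"
      unfolding ac(3) by (simp_all only: dom_ac_shift[OF n1] ran_ac_shift[OF n1])
    then show ?thesis using separates_ac_pair[OF n free ac(1)] separates_ac_pair[OF n free ac(2)]
      by metis
  next
    case index
    then show ?thesis using separates_dom_ran_index_shape[OF x(1)] by blast
  next
    case chi
    let ?blocks = "{{n, n+1}, {2*n+1, 2*n+2}}"
    have "dom x \<in> ?blocks \<and> ran x \<in> ?blocks"
      using chi by (elim insertE emptyE)
        (simp_all only: dom_chi[OF n1] ran_chi[OF n1] dom_chi_inv[OF n1] ran_chi_inv[OF n1]
          dom_chi_dom_id[OF n1] ran_chi_dom_id[OF n1] dom_chi_ran_id[OF n1] ran_chi_ran_id[OF n1]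
          insert_iff simp_thms)
    moreover have "q \<notin> P \<longrightarrow> separates (colourings n X) P q" if "P \<in> ?blocks" for P
      using that separates_chi_dom[OF n free] separates_chi_ran[OF n free] by blast
    ultimately show ?thesis by blast
  qed
qed

lemma represents_S_shape:
  assumes x: "x \<in> X" "S_shape n x"
  shows "represents (colourings n X) x (\<lambda>\<kappa>. colour_label \<kappa> x)"
proof (rule represents_colour_label)
  show "\<forall>\<kappa>\<in>colourings n X. colour_compatible \<kappa> x"
    using colour_compatible_colourings[of n x X] n x by auto
  have points: "\<And>p q. p \<noteq> q \<Longrightarrow> \<exists>\<kappa>\<in>colourings n X. \<kappa> p \<noteq> \<kappa> q"
    using separates_points[OF n free] .
  have nonempty: "colourings n X \<noteq> {}" using flip_colouring_mem[of "\<lambda>x. x = 0" n X] n by auto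
  fix q
  have "(q \<notin> dom x \<longrightarrow> separates (colourings n X) (dom x) q)
      \<and> (q \<notin> ran x \<longrightarrow> separates (colourings n X) (ran x) q)"
  proof (cases "special n x")
    case True
    with separates_dom_ran_special x(1) show ?thesis by simp
  next
    case False
    with x(2) have "rank_le_one x" by (simp add: S_shape_def)
    then show ?thesis
      using separates_subsingleton[OF points nonempty] rank_le_one_dom_ran by simp
  qed
  then show "q \<notin> dom x \<Longrightarrow> separates (colourings n X) (dom x) q"
    and "q \<notin> ran x \<Longrightarrow> separates (colourings n X) (ran x) q" by blast+
qed

end

theorem proposition5p1:
  fixes n :: nat and X :: "pmap set"
  assumes "n \<ge> 2" and "X \<subseteq> S n" and "finite X" and "card X < n"
  shows "in_var_B21 (inv_closure X) pmul pinv"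
proof (rule in_var_B21_if_represented[where K = "colourings n X"])
  have "S_shape n x" if "x \<in> X" for x
    using S_shape_if_mem_S assms(1,2) that by blast
  then show "\<forall>x\<in>X. inj_on x (dom x) \<and> (\<exists>\<beta>. represents (colourings n X) x \<beta>)"
    using inj_on_dom_S_shape represents_S_shape[OF assms(1,3,4)] by blast
  show "\<And>p q. p \<noteq> q \<Longrightarrow> \<exists>\<kappa>\<in>colourings n X. \<kappa> p \<noteq> \<kappa> q"
    using separates_points[OF assms(1) free_index_exists[OF assms(3,4)]] .
qed

end
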